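(* Assume there is $\eta\in(0,1]$ with $O(o\mid s,a)\ge \eta$ for all $o\in\mathcal O$, $s\in\mathcal S$, $a\in\mathcal A$. Then for every fixed action $a\in\mathcal A$ and all beliefs $b,b'\in\Delta(\mathcal S)$ with $b(s^\star)>0$ and $b'(s^\star)>0$, $$\big|\mathcal I(b,a)-\mathcal I(b',a)\big|\le \frac{1}{\eta}\,\|b-b'\|_1 .$$ Consequently, for every probability distribution $q$ on $\mathcal A$, $$\Big|\mathbb E_{a\sim q}\mathcal I(b,a)-\mathbb E_{a\sim q}\mathcal I(b',a)\Big|\le \frac1\eta\,\|b-b'\|_1 .$$
   Context: $\mathcal S,\mathcal A,\mathcal O$ are finite sets (latent states, actions, observations); $s^\star\in\mathcal S$ is a fixed true latent state; $O(o\mid s,a)$ is an observation kernel (for each $s,a$, a probability distribution over $o\in\mathcal O$). $\Delta(\mathcal S)$ is the probability simplex over $\mathcal S$ and $\|b-b'\|_1=\sum_{s}|b(s)-b'(s)|$. The Bayes-normalizer is $p_b(o\mid a)=\sum_{s'\in\mathcal S}O(o\mid s',a)\,b(s')$ and the oracle (Bayesian) belief update is $B^\star(b,a,o)(s)=O(o\mid s,a)\,b(s)/p_b(o\mid a)$. The truth-anchored potential is $\Psi(b)=-\log b(s^\star)\in[0,\infty]$. The one-step informativeness of action $a$ at belief $b$ is $\mathcal I(b,a)=\Psi(b)-\mathbb E_{o\sim O(\cdot\mid s^\star,a)}\big[\Psi(B^\star(b,a,o))\big]$. *)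

theory Defs
  imports "HOL-Analysis.Analysis"
begin

text \<open>Finite latent states 's, actions 'a, observations 'ob (finite types).
  Observation kernel: Obs s a ob = O(ob | s,a). Beliefs: functions on states.\<close>

definition belief_simplex :: "('s::finite \<Rightarrow> real) set" where
  "belief_simplex = {b. (\<forall>s. 0 \<le> b s) \<and> (\<Sum>s\<in>UNIV. b s) = 1}"

definition is_kernel :: "('s::finite \<Rightarrow> 'a \<Rightarrow> 'ob::finite \<Rightarrow> real) \<Rightarrow> bool" where
  "is_kernel Obs \<longleftrightarrow> (\<forall>s a. (\<forall>ob. 0 \<le> Obs s a ob) \<and> (\<Sum>ob\<in>UNIV. Obs s a ob) = 1)"

definition l1dist :: "('s::finite \<Rightarrow> real) \<Rightarrow> ('s \<Rightarrow> real) \<Rightarrow> real" where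
  "l1dist b b' = (\<Sum>s\<in>UNIV. \<bar>b s - b' s\<bar>)"

definition normalizer :: "('s::finite \<Rightarrow> 'a \<Rightarrow> 'ob \<Rightarrow> real) \<Rightarrow> ('s \<Rightarrow> real) \<Rightarrow> 'a \<Rightarrow> 'ob \<Rightarrow> real" where
  "normalizer Obs b a ob = (\<Sum>s'\<in>UNIV. Obs s' a ob * b s')"

definition bayes_update :: "('s::finite \<Rightarrow> 'a \<Rightarrow> 'ob \<Rightarrow> real) \<Rightarrow> ('s \<Rightarrow> real) \<Rightarrow> 'a \<Rightarrow> 'ob \<Rightarrow> ('s \<Rightarrow> real)" where
  "bayes_update Obs b a ob = (\<lambda>s. Obs s a ob * b s / normalizer Obs b a ob)"

definition Psi :: "'s \<Rightarrow> ('s \<Rightarrow> real) \<Rightarrow> ereal" where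
  "Psi sstar b = (if b sstar > 0 then ereal (- ln (b sstar)) else \<infinity>)"

definition informativeness :: "('s::finite \<Rightarrow> 'a \<Rightarrow> 'ob::finite \<Rightarrow> real) \<Rightarrow> 's \<Rightarrow> ('s \<Rightarrow> real) \<Rightarrow> 'a \<Rightarrow> ereal" where
  "informativeness Obs sstar b a =
     Psi sstar b - (\<Sum>ob\<in>UNIV. ereal (Obs sstar a ob) * Psi sstar (bayes_update Obs b a ob))"

end

theory Submission
  imports Defs
begin

text \<open>Using \<open>\<Sum>\<^sub>o O(o | s\<^sup>\<star>, a) = 1\<close>, the terms \<open>-ln b(s\<^sup>\<star>)\<close> cancel and \<open>\<I>(b, a)\<close> is the
  Kullback-Leibler divergence of \<open>O(\<cdot> | s\<^sup>\<star>, a)\<close> from the predictive distribution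
  \<open>p\<^sub>b(\<cdot> | a)\<close>. Only the predictive distribution depends on \<open>b\<close>; it is linear in \<open>b\<close> with
  coefficients in \<open>[0, 1]\<close>, and it is bounded below by \<open>\<eta>\<close>, where \<open>ln\<close> is \<open>1/\<eta>\<close>-Lipschitz.
  Averaging over observations and then over actions keeps the bound.\<close>

definition obs_divergence ::
    "('s::finite \<Rightarrow> 'a \<Rightarrow> 'ob::finite \<Rightarrow> real) \<Rightarrow> 's \<Rightarrow> ('s \<Rightarrow> real) \<Rightarrow> 'a \<Rightarrow> real" where
  "obs_divergence Obs sstar b a =
     (\<Sum>ob\<in>UNIV. Obs sstar a ob * ln (Obs sstar a ob / normalizer Obs b a ob))"

lemma is_kernel_nonneg: "is_kernel Obs \<Longrightarrow> 0 \<le> Obs s a ob"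
  by (simp add: is_kernel_def)

lemma is_kernel_sum: "is_kernel Obs \<Longrightarrow> (\<Sum>ob\<in>UNIV. Obs s a ob) = 1"
  by (simp add: is_kernel_def)

lemma is_kernel_le_one:
  assumes "is_kernel Obs"
  shows "Obs s a ob \<le> 1"
proof -
  have "Obs s a ob \<le> (\<Sum>ob\<in>UNIV. Obs s a ob)"
    by (rule member_le_sum) (auto simp: is_kernel_nonneg[OF assms])
  then show ?thesis by (simp add: is_kernel_sum[OF assms])
qed

lemma normalizer_ge:
  assumes "b \<in> belief_simplex" and "\<And>s. Obs s a ob \<ge> \<eta>"
  shows "normalizer Obs b a ob \<ge> \<eta>"
proof -
  have b: "\<And>s. 0 \<le> b s" "(\<Sum>s\<in>UNIV. b s) = 1"
    using assms(1) by (auto simp: belief_simplex_def)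
  have "\<eta> = (\<Sum>s\<in>UNIV. \<eta> * b s)"
    by (simp add: b flip: sum_distrib_left)
  also have "\<dots> \<le> (\<Sum>s\<in>UNIV. Obs s a ob * b s)"
    by (rule sum_mono) (simp add: b mult_right_mono assms(2))
  finally show ?thesis by (simp add: normalizer_def)
qed

lemma abs_normalizer_diff_le_l1dist:
  assumes "is_kernel Obs"
  shows "\<bar>normalizer Obs b a ob - normalizer Obs b' a ob\<bar> \<le> l1dist b b'"
proof -
  have "\<bar>normalizer Obs b a ob - normalizer Obs b' a ob\<bar> = \<bar>\<Sum>s\<in>UNIV. Obs s a ob * (b s - b' s)\<bar>"
    by (simp add: normalizer_def algebra_simps sum_subtractf)
  also have "\<dots> \<le> (\<Sum>s\<in>UNIV. \<bar>Obs s a ob * (b s - b' s)\<bar>)"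
    by (rule sum_abs)
  also have "\<dots> \<le> (\<Sum>s\<in>UNIV. \<bar>b s - b' s\<bar>)"
    by (rule sum_mono)
      (simp add: abs_mult is_kernel_nonneg[OF assms] is_kernel_le_one[OF assms] mult_left_le_one_le)
  finally show ?thesis by (simp add: l1dist_def)
qed

lemma abs_ln_diff_le:
  fixes \<eta> x y :: real
  assumes "0 < \<eta>" "\<eta> \<le> x" "\<eta> \<le> y"
  shows "\<bar>ln x - ln y\<bar> \<le> \<bar>x - y\<bar> / \<eta>"
proof -
  have one_sided: "ln u - ln v \<le> (u - v) / \<eta>" if "v \<le> u" "\<eta> \<le> v" for u v :: real
  proof -
    have "0 < v" using that assms(1) by linarith
    then have "ln u - ln v = ln (u / v)"
      using that by (simp add: ln_div)
    also have "\<dots> \<le> u / v - 1"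
      using \<open>0 < v\<close> that by (intro ln_le_minus_one) simp
    also have "\<dots> = (u - v) / v"
      using \<open>0 < v\<close> by (simp add: field_simps)
    also have "\<dots> \<le> (u - v) / \<eta>"
      using that assms(1) by (intro divide_left_mono) auto
    finally show ?thesis .
  qed
  show ?thesis
  proof (cases "y \<le> x")
    case True
    then show ?thesis using one_sided[of y x] assms by simp
  next
    case False
    then show ?thesis using one_sided[of x y] assms by simp
  qed
qed

lemma informativeness_eq_obs_divergence:
  assumes kernel: "is_kernel Obs" and eta: "0 < \<eta>" and lower: "\<And>ob s a. Obs s a ob \<ge> \<eta>"
    and b: "b \<in> belief_simplex" and bs: "0 < b sstar"
  shows "informativeness Obs sstar b a = ereal (obs_divergence Obs sstar b a)"
proof -
  let ?O = "\<lambda>ob. Obs sstar a ob" and ?p = "normalizer Obs b a"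
  have O_pos: "0 < ?O ob" for ob
    using lower eta by (meson less_le_trans)
  have p_pos: "0 < ?p ob" for ob
    using normalizer_ge[where Obs = Obs, OF b lower] eta by (meson less_le_trans)
  have Psi_update: "Psi sstar (bayes_update Obs b a ob) = ereal (- ln (b sstar) - ln (?O ob / ?p ob))"
    for ob
  proof -
    have "ln (?O ob * b sstar / ?p ob) = ln (b sstar) + ln (?O ob / ?p ob)"
      using O_pos[of ob] p_pos[of ob] bs by (simp add: ln_div ln_mult)
    then show ?thesis
      using O_pos[of ob] p_pos[of ob] bs by (simp add: Psi_def bayes_update_def)
  qed
  have "(\<Sum>ob\<in>UNIV. ?O ob * (- ln (b sstar) - ln (?O ob / ?p ob)))
      = - ln (b sstar) * (\<Sum>ob\<in>UNIV. ?O ob) - obs_divergence Obs sstar b a"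
    by (simp add: obs_divergence_def algebra_simps sum_subtractf sum_distrib_left)
  also have "\<dots> = - ln (b sstar) - obs_divergence Obs sstar b a"
    by (simp add: is_kernel_sum[OF kernel])
  finally have expected_Psi_update:
    "(\<Sum>ob\<in>UNIV. ?O ob * (- ln (b sstar) - ln (?O ob / ?p ob)))
      = - ln (b sstar) - obs_divergence Obs sstar b a" .
  have Psi_b: "Psi sstar b = ereal (- ln (b sstar))"
    using bs by (simp add: Psi_def)
  show ?thesis
    by (simp add: informativeness_def Psi_b Psi_update expected_Psi_update)
qed

lemma obs_divergence_lipschitz:
  assumes kernel: "is_kernel Obs" and eta: "0 < \<eta>" and lower: "\<And>ob s a. Obs s a ob \<ge> \<eta>"
    and b: "b \<in> belief_simplex" and b': "b' \<in> belief_simplex"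
  shows "\<bar>obs_divergence Obs sstar b a - obs_divergence Obs sstar b' a\<bar> \<le> l1dist b b' / \<eta>"
proof -
  let ?O = "\<lambda>ob. Obs sstar a ob" and ?p = "normalizer Obs b a" and ?p' = "normalizer Obs b' a"
  have p_ge: "\<eta> \<le> ?p ob" "\<eta> \<le> ?p' ob" for ob
    using normalizer_ge[where Obs = Obs, OF b lower] normalizer_ge[where Obs = Obs, OF b' lower] by auto
  have p_pos: "0 < ?p ob" "0 < ?p' ob" for ob
    using p_ge[of ob] eta by linarith+
  have "obs_divergence Obs sstar b a - obs_divergence Obs sstar b' a
      = (\<Sum>ob\<in>UNIV. ?O ob * (ln (?p' ob) - ln (?p ob)))"
  proof -
    have "ln (?O ob / ?p ob) - ln (?O ob / ?p' ob) = ln (?p' ob) - ln (?p ob)" for ob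
      using lower[of sstar a ob] eta p_pos[of ob] by (simp add: ln_div)
    then show ?thesis
      by (simp add: obs_divergence_def flip: sum_subtractf right_diff_distrib)
  qed
  also have "\<bar>\<dots>\<bar> \<le> (\<Sum>ob\<in>UNIV. \<bar>?O ob * (ln (?p' ob) - ln (?p ob))\<bar>)"
    by (rule sum_abs)
  also have "\<dots> \<le> (\<Sum>ob\<in>UNIV. ?O ob * (l1dist b b' / \<eta>))"
  proof (rule sum_mono)
    fix ob
    have "\<bar>ln (?p' ob) - ln (?p ob)\<bar> \<le> \<bar>?p' ob - ?p ob\<bar> / \<eta>"
      by (rule abs_ln_diff_le[OF eta p_ge(2) p_ge(1)])
    also have "\<dots> \<le> l1dist b b' / \<eta>"
      using abs_normalizer_diff_le_l1dist[OF kernel, of b a ob b'] eta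
      by (simp add: abs_minus_commute divide_right_mono)
    finally show "\<bar>?O ob * (ln (?p' ob) - ln (?p ob))\<bar> \<le> ?O ob * (l1dist b b' / \<eta>)"
      by (metis abs_mult abs_of_nonneg is_kernel_nonneg[OF kernel] mult_left_mono)
  qed
  also have "\<dots> = l1dist b b' / \<eta>"
    by (simp only: is_kernel_sum[OF kernel] flip: sum_distrib_right)
  finally show ?thesis .
qed

lemma abs_weighted_sum_diff_le:
  fixes q f g :: "'a \<Rightarrow> real"
  assumes "finite A" "\<And>a. a \<in> A \<Longrightarrow> 0 \<le> q a" "(\<Sum>a\<in>A. q a) = 1"
    and "\<And>a. a \<in> A \<Longrightarrow> \<bar>f a - g a\<bar> \<le> c"
  shows "\<bar>(\<Sum>a\<in>A. q a * f a) - (\<Sum>a\<in>A. q a * g a)\<bar> \<le> c"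
proof -
  have "\<bar>(\<Sum>a\<in>A. q a * f a) - (\<Sum>a\<in>A. q a * g a)\<bar> = \<bar>\<Sum>a\<in>A. q a * (f a - g a)\<bar>"
    by (simp add: algebra_simps sum_subtractf)
  also have "\<dots> \<le> (\<Sum>a\<in>A. \<bar>q a * (f a - g a)\<bar>)"
    by (rule sum_abs)
  also have "\<dots> \<le> (\<Sum>a\<in>A. q a * c)"
    using assms(2,4) by (intro sum_mono) (simp add: abs_mult mult_left_mono)
  also have "\<dots> = c"
    by (simp add: assms(3) flip: sum_distrib_right)
  finally show ?thesis .
qed

theorem mainTheorem1:
  fixes Obs :: "'s::finite \<Rightarrow> 'a::finite \<Rightarrow> 'ob::finite \<Rightarrow> real"
    and sstar :: 's and \<eta> :: real
  assumes kernel: "is_kernel Obs"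
    and eta: "0 < \<eta>" "\<eta> \<le> 1"
    and lower: "\<And>ob s a. Obs s a ob \<ge> \<eta>"
  shows "(\<forall>a b b'. b \<in> belief_simplex \<longrightarrow> b' \<in> belief_simplex \<longrightarrow> b sstar > 0 \<longrightarrow> b' sstar > 0 \<longrightarrow>
            \<bar>informativeness Obs sstar b a - informativeness Obs sstar b' a\<bar>
              \<le> ereal (l1dist b b' / \<eta>))
       \<and> (\<forall>q b b'. (\<forall>a. 0 \<le> q a) \<longrightarrow> (\<Sum>a\<in>UNIV. q a) = 1 \<longrightarrow>
            b \<in> belief_simplex \<longrightarrow> b' \<in> belief_simplex \<longrightarrow> b sstar > 0 \<longrightarrow> b' sstar > 0 \<longrightarrow>
            \<bar>(\<Sum>a\<in>UNIV. ereal (q a) * informativeness Obs sstar b a)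
              - (\<Sum>a\<in>UNIV. ereal (q a) * informativeness Obs sstar b' a)\<bar>
              \<le> ereal (l1dist b b' / \<eta>))"
proof (intro conjI allI impI)
  fix a and b b' :: "'s \<Rightarrow> real"
  assume b: "b \<in> belief_simplex" "0 < b sstar" and b': "b' \<in> belief_simplex" "0 < b' sstar"
  show "\<bar>informativeness Obs sstar b a - informativeness Obs sstar b' a\<bar> \<le> ereal (l1dist b b' / \<eta>)"
    using obs_divergence_lipschitz[OF kernel eta(1) lower b(1) b'(1)]
    by (simp add: informativeness_eq_obs_divergence[OF kernel eta(1) lower b]
        informativeness_eq_obs_divergence[OF kernel eta(1) lower b'])
next
  fix q :: "'a \<Rightarrow> real" and b b' :: "'s \<Rightarrow> real"
  assume q: "\<forall>a. 0 \<le> q a" "(\<Sum>a\<in>UNIV. q a) = 1"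
    and b: "b \<in> belief_simplex" "0 < b sstar" and b': "b' \<in> belief_simplex" "0 < b' sstar"
  have "\<bar>(\<Sum>a\<in>UNIV. q a * obs_divergence Obs sstar b a) - (\<Sum>a\<in>UNIV. q a * obs_divergence Obs sstar b' a)\<bar>
      \<le> l1dist b b' / \<eta>"
    using q obs_divergence_lipschitz[OF kernel eta(1) lower b(1) b'(1)]
    by (intro abs_weighted_sum_diff_le) auto
  then show "\<bar>(\<Sum>a\<in>UNIV. ereal (q a) * informativeness Obs sstar b a)
      - (\<Sum>a\<in>UNIV. ereal (q a) * informativeness Obs sstar b' a)\<bar> \<le> ereal (l1dist b b' / \<eta>)"
    by (simp add: informativeness_eq_obs_divergence[OF kernel eta(1) lower b]
        informativeness_eq_obs_divergence[OF kernel eta(1) lower b'])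
qed

end
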